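(* For every integer $n>1$ and every $k\in\mathbb{Z}$, $$(\Lambda_{Ld}\ast\beta_k)(n)=Ld(n)\beta_k(n)-\beta_{k-1}(n).$$
   Context: $Ld(n)=\sum_{p^\alpha\parallel n}\frac{\alpha}{p}$ (sum over primes $p\mid n$, $\alpha$ the exact exponent of $p$ in $n$). $\Lambda_{Ld}(n)=\frac1p$ if $n=p^k$ for some prime $p$ and integer $k\geq1$, and $0$ otherwise. $\beta_k(n)=\sum_{p\mid n}p^k$ (sum over distinct primes dividing $n$). $\ast$ is Dirichlet convolution. *)

theory Defs
  imports "HOL-Number_Theory.Number_Theory"
begin

definition Ld :: "nat \<Rightarrow> real" where
  "Ld n = (\<Sum>p\<in>prime_factors n. real (multiplicity p n) / real p)"

definition Lambda_Ld :: "nat \<Rightarrow> real" where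
  "Lambda_Ld n = (if primepow n then 1 / real (aprimedivisor n) else 0)"

definition beta :: "int \<Rightarrow> nat \<Rightarrow> real" where
  "beta k n = (\<Sum>p\<in>prime_factors n. real p powi k)"

definition dirichlet_conv :: "(nat \<Rightarrow> real) \<Rightarrow> (nat \<Rightarrow> real) \<Rightarrow> nat \<Rightarrow> real" where
  "dirichlet_conv f g n = (\<Sum>d | d dvd n. f d * g (n div d))"

end

theory Submission
  imports Defs
begin

text \<open>
  Only the prime powers \<open>p^j\<close> with \<open>1 \<le> j \<le> \<alpha> = multiplicity p n\<close> contribute to the
  convolution, each with weight \<open>1/p\<close>. Dividing \<open>n\<close> by such a \<open>p^j\<close> leaves the set of prime
  divisors unchanged unless \<open>j = \<alpha>\<close>, when \<open>p\<close> itself disappears. Hence the contribution of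
  \<open>p\<close> is \<open>(\<alpha>/p) \<beta>\<^sub>k(n) - p\<^sup>k/p\<close>, and summing over \<open>p\<close> gives \<open>Ld(n) \<beta>\<^sub>k(n) - \<beta>\<^bsub>k-1\<^esub>(n)\<close>.
\<close>

lemma sum_divisors_supported_on_primepow:
  fixes f :: "nat \<Rightarrow> 'a :: comm_monoid_add"
  assumes "n \<noteq> 0" and "\<And>d. \<not> primepow d \<Longrightarrow> f d = 0"
  shows "(\<Sum>d | d dvd n. f d) = (\<Sum>p\<in>prime_factors n. \<Sum>j\<in>{0<..multiplicity p n}. f (p ^ j))"
proof -
  let ?A = "SIGMA p:prime_factors n. {0<..multiplicity p n}"
  have "(\<Sum>d | d dvd n. f d) = (\<Sum>d\<in>primepow_factors n. f d)"
    using assms by (intro sum.mono_neutral_right) (auto simp: primepow_factors_def)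
  also have "primepow_factors n = (\<lambda>(p, j). p ^ j) ` ?A"
    by (subst primepow_factors_altdef[OF assms(1)]) fast+
  also have "(\<Sum>d\<in>(\<lambda>(p, j). p ^ j) ` ?A. f d) = (\<Sum>(p, j)\<in>?A. f (p ^ j))"
    by (subst sum.reindex)
       (auto simp: inj_on_def prime_power_inj'' prime_factors_multiplicity case_prod_unfold)
  also have "\<dots> = (\<Sum>p\<in>prime_factors n. \<Sum>j\<in>{0<..multiplicity p n}. f (p ^ j))"
    by (rule sum.Sigma[symmetric]) auto
  finally show ?thesis .
qed

lemma Lambda_Ld_prime_power:
  "prime p \<Longrightarrow> 0 < j \<Longrightarrow> Lambda_Ld (p ^ j) = 1 / real p"
  by (simp add: Lambda_Ld_def primepowI)

lemma dirichlet_conv_Lambda_Ld: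
  assumes "n \<noteq> 0"
  shows "dirichlet_conv Lambda_Ld g n =
           (\<Sum>p\<in>prime_factors n. \<Sum>j\<in>{0<..multiplicity p n}. g (n div p ^ j) / real p)"
proof -
  have "dirichlet_conv Lambda_Ld g n =
          (\<Sum>p\<in>prime_factors n. \<Sum>j\<in>{0<..multiplicity p n}. Lambda_Ld (p ^ j) * g (n div p ^ j))"
    unfolding dirichlet_conv_def
    by (rule sum_divisors_supported_on_primepow[OF assms]) (simp add: Lambda_Ld_def)
  also have "\<dots> = (\<Sum>p\<in>prime_factors n. \<Sum>j\<in>{0<..multiplicity p n}. g (n div p ^ j) / real p)"
    by (intro sum.cong refl) (simp add: Lambda_Ld_prime_power prime_factors_multiplicity)
  finally show ?thesis .
qed

lemma prime_factors_div_prime_power: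
  fixes n p j :: nat
  assumes p: "prime p" and n: "n \<noteq> 0" and j: "0 < j" "j \<le> multiplicity p n"
  shows "prime_factors (n div p ^ j) =
           (if j = multiplicity p n then prime_factors n - {p} else prime_factors n)"
proof -
  define m where "m = n div p ^ j"
  have nm: "n = p ^ j * m"
    using j by (simp add: m_def multiplicity_dvd')
  have m: "m \<noteq> 0" and pj: "p ^ j \<noteq> 0"
    using nm n by auto
  have factors: "prime_factors n = insert p (prime_factors m)"
    using prime_factors_product[OF pj m] nm p j by (simp add: prime_factors_power prime_prime_factors)
  have "p \<in> prime_factors m \<longleftrightarrow> p ^ Suc j dvd n"
    using p m pj by (auto simp: nm in_prime_factors_iff)
  also have "\<dots> \<longleftrightarrow> j \<noteq> multiplicity p n"
    using p n j by (subst power_dvd_iff_le_multiplicity) auto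
  finally show ?thesis
    using factors by (auto simp: m_def[symmetric])
qed

lemma beta_div_prime_power:
  fixes n p j :: nat
  assumes "prime p" and "n \<noteq> 0" and "0 < j" "j \<le> multiplicity p n"
  shows "beta k (n div p ^ j) =
           beta k n - (if j = multiplicity p n then real p powi k else 0)"
proof -
  have "p \<in> prime_factors n"
    using assms by (simp add: prime_factors_multiplicity)
  then show ?thesis
    using prime_factors_div_prime_power[OF assms] by (simp add: beta_def sum_diff1)
qed

lemma sum_beta_div_prime_powers:
  fixes n p :: nat
  assumes n: "n \<noteq> 0" and p: "p \<in> prime_factors n"
  shows "(\<Sum>j\<in>{0<..multiplicity p n}. beta k (n div p ^ j) / real p)
           = real (multiplicity p n) / real p * beta k n - real p powi (k - 1)"
proof -
  let ?\<alpha> = "multiplicity p n"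
  have "prime p" "0 < ?\<alpha>" and p0: "real p \<noteq> 0"
    using p n by (auto simp: prime_factors_multiplicity prime_gt_0_nat)
  then have "(\<Sum>j\<in>{0<..?\<alpha>}. beta k (n div p ^ j) / real p)
      = (\<Sum>j\<in>{0<..?\<alpha>}. beta k n / real p - (if j = ?\<alpha> then real p powi k / real p else 0))"
    by (intro sum.cong) (auto simp: beta_div_prime_power n diff_divide_distrib)
  also have "\<dots> = real ?\<alpha> / real p * beta k n - real p powi k / real p"
    using \<open>0 < ?\<alpha>\<close> by (simp add: sum_subtractf)
  also have "real p powi k / real p = real p powi (k - 1)"
    using p0 by (simp add: power_int_diff)
  finally show ?thesis .
qed

theorem theorem3p3:
  fixes n :: nat and k :: int
  assumes "n > 1"
  shows "dirichlet_conv Lambda_Ld (beta k) n = Ld n * beta k n - beta (k - 1) n"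
proof -
  have n: "n \<noteq> 0" using assms by simp
  have "dirichlet_conv Lambda_Ld (beta k) n
          = (\<Sum>p\<in>prime_factors n. real (multiplicity p n) / real p * beta k n - real p powi (k - 1))"
    by (simp add: dirichlet_conv_Lambda_Ld[OF n] sum_beta_div_prime_powers[OF n])
  also have "\<dots> = Ld n * beta k n - beta (k - 1) n"
    by (simp add: Ld_def beta_def sum_subtractf sum_distrib_right)
  finally show ?thesis .
qed

end
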